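(* Let $\mathcal{U}$ be a free ultrafilter on $\mathbb{N}$ and ${}^\ast\mathbb{R}=\mathbb{R}^{\mathbb{N}}/\mathcal{U}$. Let $\langle u_n\rangle_{n\in\mathbb{N}}$ be a sequence of real numbers and let $u=[\langle u_n\rangle]\in{}^\ast\mathbb{R}$. If $u$ is finite and $u>u_0$, where $u_0=\operatorname{st}(u)$, then the sequence $\langle u_n\rangle$ possesses a strictly decreasing subsequence.
   Context: A free ultrafilter $\mathcal{U}$ on $\mathbb{N}$ is an ultrafilter containing all cofinite subsets of $\mathbb{N}$. ${}^\ast\mathbb{R}=\mathbb{R}^{\mathbb{N}}/\mathcal{U}$ is the set of equivalence classes of real sequences, two sequences being equivalent iff they agree on a set in $\mathcal{U}$; it is an ordered field with termwise operations and order $[\langle v_n\rangle]<[\langle w_n\rangle]$ iff $\{n: v_n<w_n\}\in\mathcal{U}$, and $\mathbb{R}$ is embedded via constant sequences. An element $u\in{}^\ast\mathbb{R}$ is finite if $-r<u<r$ for some $r\in\mathbb{R}$. For finite $u$, the standard part $\operatorname{st}(u)$ is the unique real number $u_0$ nearest to $u$, i.e. such that $|u-u_0|<\varepsilon$ for every positive real $\varepsilon$. *)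

theory Defs
  imports Complex_Main
begin

definition free_ultrafilter :: "nat set set \<Rightarrow> bool" where
  "free_ultrafilter U \<longleftrightarrow>
     {} \<notin> U \<and>
     (\<forall>A B. A \<in> U \<longrightarrow> B \<in> U \<longrightarrow> A \<inter> B \<in> U) \<and>
     (\<forall>A B. A \<in> U \<longrightarrow> A \<subseteq> B \<longrightarrow> B \<in> U) \<and>
     (\<forall>A. A \<in> U \<or> - A \<in> U) \<and>
     (\<forall>A. finite (- A) \<longrightarrow> A \<in> U)"

text \<open>Elements of the ultrapower are represented by real sequences; all notions
  below depend only on the equivalence class modulo U.
  Order: [v] < [w] iff {n. v n < w n} in U.\<close>
definition hless :: "nat set set \<Rightarrow> (nat \<Rightarrow> real) \<Rightarrow> (nat \<Rightarrow> real) \<Rightarrow> bool" where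
  "hless U v w \<longleftrightarrow> {n. v n < w n} \<in> U"

definition hstar :: "real \<Rightarrow> nat \<Rightarrow> real" where
  "hstar r = (\<lambda>_. r)"

definition hfinite :: "nat set set \<Rightarrow> (nat \<Rightarrow> real) \<Rightarrow> bool" where
  "hfinite U u \<longleftrightarrow> (\<exists>r::real. hless U (hstar (-r)) u \<and> hless U u (hstar r))"

definition st :: "nat set set \<Rightarrow> (nat \<Rightarrow> real) \<Rightarrow> real" where
  "st U u = (THE u0. \<forall>eps>0. hless U (\<lambda>n. \<bar>u n - u0\<bar>) (hstar eps))"

end

theory Submission
  imports Defs "HOL-Library.Infinite_Set"
begin

text \<open>Every set in a free ultrafilter is infinite, so for each \<open>\<epsilon> > 0\<close> infinitely many
  terms \<open>u n\<close> lie in the interval \<open>(st u, st u + \<epsilon>)\<close>. Starting from any such term and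
  choosing each next one further along the sequence and below the previous one yields a
  strictly decreasing subsequence.\<close>

lemma free_ultrafilter_empty: "free_ultrafilter U \<Longrightarrow> {} \<notin> U"
  by (simp add: free_ultrafilter_def)

lemma free_ultrafilter_Int: "free_ultrafilter U \<Longrightarrow> A \<in> U \<Longrightarrow> B \<in> U \<Longrightarrow> A \<inter> B \<in> U"
  by (simp add: free_ultrafilter_def)

lemma free_ultrafilter_mono: "free_ultrafilter U \<Longrightarrow> A \<in> U \<Longrightarrow> A \<subseteq> B \<Longrightarrow> B \<in> U"
  unfolding free_ultrafilter_def by blast

lemma free_ultrafilter_Compl: "free_ultrafilter U \<Longrightarrow> A \<notin> U \<Longrightarrow> - A \<in> U"
  unfolding free_ultrafilter_def by blast

lemma free_ultrafilter_cofinite: "free_ultrafilter U \<Longrightarrow> finite (- A) \<Longrightarrow> A \<in> U"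
  unfolding free_ultrafilter_def by blast

lemma free_ultrafilter_disjoint:
  "free_ultrafilter U \<Longrightarrow> A \<in> U \<Longrightarrow> B \<in> U \<Longrightarrow> A \<inter> B \<noteq> {}"
  using free_ultrafilter_Int free_ultrafilter_empty by fastforce

lemma free_ultrafilter_infinite:
  assumes U: "free_ultrafilter U" and A: "A \<in> U"
  shows "infinite A"
proof
  assume "finite A"
  then have "- A \<in> U"
    by (intro free_ultrafilter_cofinite[OF U]) simp
  from free_ultrafilter_disjoint[OF U A this] show False
    by simp
qed

lemma st_witness_exists:
  assumes U: "free_ultrafilter U" and "hfinite U u"
  shows "\<exists>s. \<forall>eps>0. {n. \<bar>u n - s\<bar> < eps} \<in> U"
proof -
  obtain r where below: "{n. - r < u n} \<in> U" and above: "{n. u n < r} \<in> U"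
    using \<open>hfinite U u\<close> unfolding hfinite_def hless_def hstar_def by auto
  define A where "A = {x. {n. x < u n} \<in> U}"
  have "- r \<in> A"
    using below by (simp add: A_def)
  have "x \<le> r" if "x \<in> A" for x
  proof (rule ccontr)
    assume "\<not> x \<le> r"
    then have "{n. x < u n} \<inter> {n. u n < r} = {}"
      by auto
    moreover have "{n. x < u n} \<in> U"
      using \<open>x \<in> A\<close> by (simp add: A_def)
    ultimately show False
      using free_ultrafilter_disjoint[OF U _ above] by blast
  qed
  then have "bdd_above A"
    by (auto simp: bdd_above_def)
  show ?thesis
  proof (intro exI allI impI)
    fix eps :: real
    assume "eps > 0"
    then have "Sup A - eps < Sup A"
      by simp
    then obtain a where "a \<in> A" "Sup A - eps < a"
      using less_cSupE \<open>- r \<in> A\<close> by blast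
    then have "{n. a < u n} \<in> U" "{n. a < u n} \<subseteq> {n. Sup A - eps < u n}"
      by (auto simp: A_def)
    then have lower: "{n. Sup A - eps < u n} \<in> U"
      by (rule free_ultrafilter_mono[OF U])
    have "Sup A + eps / 2 \<notin> A"
    proof
      assume "Sup A + eps / 2 \<in> A"
      from cSup_upper[OF this \<open>bdd_above A\<close>] \<open>eps > 0\<close> show False
        by simp
    qed
    then have upper: "- {n. Sup A + eps / 2 < u n} \<in> U"
      by (intro free_ultrafilter_Compl[OF U]) (simp add: A_def)
    have "{n. Sup A - eps < u n} \<inter> - {n. Sup A + eps / 2 < u n} \<subseteq> {n. \<bar>u n - Sup A\<bar> < eps}"
      using \<open>eps > 0\<close> by auto
    with free_ultrafilter_Int[OF U lower upper] show "{n. \<bar>u n - Sup A\<bar> < eps} \<in> U"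
      by (rule free_ultrafilter_mono[OF U])
  qed
qed

lemma st_witness_unique:
  fixes u :: "nat \<Rightarrow> real"
  assumes U: "free_ultrafilter U"
    and s: "\<forall>eps>0. {n. \<bar>u n - s\<bar> < eps} \<in> U"
    and t: "\<forall>eps>0. {n. \<bar>u n - t\<bar> < eps} \<in> U"
  shows "t = s"
proof (rule ccontr)
  assume "t \<noteq> s"
  define eps where "eps = \<bar>t - s\<bar> / 2"
  have "eps > 0"
    using \<open>t \<noteq> s\<close> by (simp add: eps_def)
  have "{n. \<bar>u n - s\<bar> < eps} \<inter> {n. \<bar>u n - t\<bar> < eps} = {}"
    unfolding eps_def by (auto simp: abs_less_iff abs_if split: if_splits)
  moreover have "{n. \<bar>u n - s\<bar> < eps} \<in> U" "{n. \<bar>u n - t\<bar> < eps} \<in> U"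
    using s t \<open>eps > 0\<close> by blast+
  ultimately show False
    using free_ultrafilter_disjoint[OF U] by blast
qed

lemma st_approx:
  assumes U: "free_ultrafilter U" and "hfinite U u" and "eps > 0"
  shows "{n. \<bar>u n - st U u\<bar> < eps} \<in> U"
proof -
  obtain s where s: "\<forall>eps>0. {n. \<bar>u n - s\<bar> < eps} \<in> U"
    using st_witness_exists[OF assms(1,2)] by blast
  have "st U u = s"
    unfolding st_def hless_def hstar_def
  proof (rule the_equality)
    show "\<forall>eps>0. {n. \<bar>u n - s\<bar> < eps} \<in> U"
      by (fact s)
  qed (fact st_witness_unique[OF U s])
  with s \<open>eps > 0\<close> show ?thesis
    by simp
qed

lemma strict_decseq_subseq_if_infinitely_close_above:
  fixes u :: "nat \<Rightarrow> 'a::{linorder,no_top}"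
  assumes close: "\<And>x. s < x \<Longrightarrow> infinite {n. s < u n \<and> u n < x}"
  shows "\<exists>r. strict_mono r \<and> (\<forall>k. u (r (Suc k)) < u (r k))"
proof -
  have next_term: "\<exists>n. s < u n \<and> m < n \<and> u n < u m" if "s < u m" for m
    using close[OF that] unfolding infinite_nat_iff_unbounded by blast
  have "\<exists>n. s < u n"
  proof -
    obtain x where "s < x"
      using gt_ex by blast
    from not_finite_existsD[OF close[OF this]] show ?thesis
      by blast
  qed
  then obtain r where "\<forall>k. s < u (r k) \<and> r k < r (Suc k) \<and> u (r (Suc k)) < u (r k)"
    using dependent_nat_choice[where P = "\<lambda>_ n. s < u n"
        and Q = "\<lambda>_ m n. m < n \<and> u n < u m"] next_term
    by blast
  then show ?thesis
    by (auto simp: strict_mono_Suc_iff)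
qed

theorem proposition3p5:
  fixes U :: "nat set set" and u :: "nat \<Rightarrow> real"
  assumes "free_ultrafilter U"
    and "hfinite U u"
    and "hless U (hstar (st U u)) u"
  shows "\<exists>r::nat \<Rightarrow> nat. strict_mono r \<and> (\<forall>k. u (r (Suc k)) < u (r k))"
proof (rule strict_decseq_subseq_if_infinitely_close_above)
  fix x
  assume "st U u < x"
  then have "{n. \<bar>u n - st U u\<bar> < x - st U u} \<in> U"
    using st_approx[OF assms(1,2)] by simp
  moreover have "{n. st U u < u n} \<in> U"
    using assms(3) by (simp add: hless_def hstar_def)
  ultimately have "{n. \<bar>u n - st U u\<bar> < x - st U u} \<inter> {n. st U u < u n} \<in> U"
    by (rule free_ultrafilter_Int[OF assms(1)])
  then have "infinite ({n. \<bar>u n - st U u\<bar> < x - st U u} \<inter> {n. st U u < u n})"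
    by (rule free_ultrafilter_infinite[OF assms(1)])
  then show "infinite {n. st U u < u n \<and> u n < x}"
    by (rule infinite_super[rotated]) auto
qed

end
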